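(* The category of partial groups (with morphisms of partial groups) is equivalent to the full subcategory of the category of simplicial sets whose objects are the reduced $N$-simplicial sets with inversion.
   Context: A partial group is a tuple $(\mathcal{M},\mathbf{D},\Pi,(-)^{-1})$: $\mathcal{M}$ is a set, $\mathbf{D}$ is a subset of the free monoid $\mathbf{W}(\mathcal{M})$ of words in $\mathcal{M}$ containing all words of length one and such that $u\circ v\in\mathbf{D}$ implies $u,v\in\mathbf{D}$ ($\circ$ = concatenation); $\Pi\colon\mathbf{D}\to\mathcal{M}$ restricts to the identity on words of length one and satisfies: if $u\circ v\circ w\in\mathbf{D}$ then $u\circ(\Pi(v))\circ w\in\mathbf{D}$ and $\Pi(u\circ v\circ w)=\Pi(u\circ(\Pi(v))\circ w)$; the unit is $1=\Pi(\emptyset)$; $x\mapsto x^{-1}$ is an involutive bijection of $\mathcal{M}$, extended to words by $(x_1,\dots,x_n)^{-1}=(x_n^{-1},\dots,x_1^{-1})$, such that $u\in\mathbf{D}$ implies $u^{-1}\circ u\in\mathbf{D}$ and $\Pi(u^{-1}\circ u)=1$. A morphism $\beta\colon\mathcal{M}\to\mathcal{M}'$ of partial groups is a map sending $\mathbf{D}$ into $\mathbf{D}'$ (letterwise) with $\beta(\Pi(u))=\Pi'(\beta(u))$ for all $u\in\mathbf{D}$. A simplicial set $X$ is reduced if $X_0$ is a point $v$; its unit is $1_X=s_0(v)$. The enumerating operator $E_n\colon X_n\to X_1^{n}$ sends an $n$-simplex to its consecutive edges; $X$ is an $N$-simplicial set if each $E_n$ is injective, and a simplex with edges $x_1,\dots,x_n$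 is written $[x_1|\dots|x_n]$. The product operator $\Pi\colon X_n\to X_1$ sends a simplex to its edge from vertex $0$ to vertex $n$. The opposite $X^{op}$ has the same simplices with $d_i^{op}=d_{n-i}$, $s_i^{op}=s_{n-i}$. An inversion on a reduced $N$-simplicial set $X$ is a simplicial map $\nu\colon X\to X^{op}$ with $\nu\circ\nu=\mathrm{Id}$ such that for every $x\in X_n$, $n\ge1$, $[\nu(x)|x]\in X_{2n}$ and $\Pi([\nu(x)|x])=1_X$. *)

theory Defs
  imports Main
begin

text \<open>Words in the free monoid W(M) are lists; concatenation is append.\<close>

record 'a partial_group =
  pg_carrier :: "'a set"
  pg_dom :: "'a list set"
  pg_prod :: "'a list \<Rightarrow> 'a"
  pg_inv :: "'a \<Rightarrow> 'a"

definition pg_unit :: "('a, 'z) partial_group_scheme \<Rightarrow> 'a" where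
  "pg_unit M = pg_prod M []"

definition inv_word :: "('a, 'z) partial_group_scheme \<Rightarrow> 'a list \<Rightarrow> 'a list" where
  "inv_word M u = rev (map (pg_inv M) u)"

definition is_partial_group :: "('a, 'z) partial_group_scheme \<Rightarrow> bool" where
  "is_partial_group M \<longleftrightarrow>
     pg_dom M \<subseteq> lists (pg_carrier M)
   \<and> [] \<in> pg_dom M
   \<and> (\<forall>x\<in>pg_carrier M. [x] \<in> pg_dom M)
   \<and> (\<forall>u v. u @ v \<in> pg_dom M \<longrightarrow> u \<in> pg_dom M \<and> v \<in> pg_dom M)
   \<and> (\<forall>u\<in>pg_dom M. pg_prod M u \<in> pg_carrier M)
   \<and> (\<forall>x\<in>pg_carrier M. pg_prod M [x] = x)
   \<and> (\<forall>u v w. u @ v @ w \<in> pg_dom M \<longrightarrow>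
         u @ [pg_prod M v] @ w \<in> pg_dom M
       \<and> pg_prod M (u @ v @ w) = pg_prod M (u @ [pg_prod M v] @ w))
   \<and> (\<forall>x\<in>pg_carrier M. pg_inv M x \<in> pg_carrier M \<and> pg_inv M (pg_inv M x) = x)
   \<and> (\<forall>u\<in>pg_dom M. inv_word M u @ u \<in> pg_dom M
         \<and> pg_prod M (inv_word M u @ u) = pg_unit M)"

text \<open>Morphisms of partial groups (only their values on the carrier matter).\<close>
definition pg_hom :: "('a, 'z) partial_group_scheme \<Rightarrow> ('b, 'y) partial_group_scheme
    \<Rightarrow> ('a \<Rightarrow> 'b) \<Rightarrow> bool" where
  "pg_hom M M' \<beta> \<longleftrightarrow>
     (\<forall>x\<in>pg_carrier M. \<beta> x \<in> pg_carrier M')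
   \<and> (\<forall>u\<in>pg_dom M. map \<beta> u \<in> pg_dom M' \<and> \<beta> (pg_prod M u) = pg_prod M' (map \<beta> u))"

text \<open>face X n i is d_i : X_n \<rightarrow> X_(n-1) (for n \<ge> 1, i \<le> n) and
  degen X n i is s_i : X_n \<rightarrow> X_(n+1) (for i \<le> n).\<close>
record 's sset =
  simp :: "nat \<Rightarrow> 's set"
  face :: "nat \<Rightarrow> nat \<Rightarrow> 's \<Rightarrow> 's"
  degen :: "nat \<Rightarrow> nat \<Rightarrow> 's \<Rightarrow> 's"

definition is_sset :: "'s sset \<Rightarrow> bool" where
  "is_sset X \<longleftrightarrow>
     (\<forall>n i x. 1 \<le> n \<and> i \<le> n \<and> x \<in> simp X n \<longrightarrow> face X n i x \<in> simp X (n - 1))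
   \<and> (\<forall>n i x. i \<le> n \<and> x \<in> simp X n \<longrightarrow> degen X n i x \<in> simp X (Suc n))
   \<and> (\<forall>n i j x. 2 \<le> n \<and> i < j \<and> j \<le> n \<and> x \<in> simp X n \<longrightarrow>
        face X (n - 1) i (face X n j x) = face X (n - 1) (j - 1) (face X n i x))
   \<and> (\<forall>n i j x. i < j \<and> j \<le> n \<and> x \<in> simp X n \<longrightarrow>
        face X (Suc n) i (degen X n j x) = degen X (n - 1) (j - 1) (face X n i x))
   \<and> (\<forall>n j x. j \<le> n \<and> x \<in> simp X n \<longrightarrow>
        face X (Suc n) j (degen X n j x) = x \<and> face X (Suc n) (Suc j) (degen X n j x) = x)
   \<and> (\<forall>n i j x. Suc j < i \<and> i \<le> Suc n \<and> x \<in> simp X n \<longrightarrow>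
        face X (Suc n) i (degen X n j x) = degen X (n - 1) j (face X n (i - 1) x))
   \<and> (\<forall>n i j x. i \<le> j \<and> j \<le> n \<and> x \<in> simp X n \<longrightarrow>
        degen X (Suc n) i (degen X n j x) = degen X (Suc n) (Suc j) (degen X n i x))"

text \<open>Simplicial maps (only their values on simplices matter).\<close>
definition sset_map :: "'s sset \<Rightarrow> 't sset \<Rightarrow> (nat \<Rightarrow> 's \<Rightarrow> 't) \<Rightarrow> bool" where
  "sset_map X Y f \<longleftrightarrow>
     (\<forall>n x. x \<in> simp X n \<longrightarrow> f n x \<in> simp Y n)
   \<and> (\<forall>n i x. 1 \<le> n \<and> i \<le> n \<and> x \<in> simp X n \<longrightarrow>
        f (n - 1) (face X n i x) = face Y n i (f n x))
   \<and> (\<forall>n i x. i \<le> n \<and> x \<in> simp X n \<longrightarrow>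
        f (Suc n) (degen X n i x) = degen Y n i (f n x))"

definition sset_iso :: "'s sset \<Rightarrow> 't sset \<Rightarrow> bool" where
  "sset_iso X Y \<longleftrightarrow> (\<exists>f g. sset_map X Y f \<and> sset_map Y X g
      \<and> (\<forall>n. \<forall>x\<in>simp X n. g n (f n x) = x)
      \<and> (\<forall>n. \<forall>y\<in>simp Y n. f n (g n y) = y))"

definition reduced :: "'s sset \<Rightarrow> bool" where
  "reduced X \<longleftrightarrow> (\<exists>v. simp X 0 = {v})"

definition sset_unit :: "'s sset \<Rightarrow> 's" where
  "sset_unit X = degen X 0 0 (THE v. simp X 0 = {v})"

fun drop_last :: "'s sset \<Rightarrow> nat \<Rightarrow> nat \<Rightarrow> 's \<Rightarrow> 's" where
  "drop_last X 0 m x = x"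
| "drop_last X (Suc k) m x = drop_last X k (m - 1) (face X m m x)"

fun drop_first :: "'s sset \<Rightarrow> nat \<Rightarrow> nat \<Rightarrow> 's \<Rightarrow> 's" where
  "drop_first X 0 m x = x"
| "drop_first X (Suc k) m x = drop_first X k (m - 1) (face X m 0 x)"

fun drop_second :: "'s sset \<Rightarrow> nat \<Rightarrow> nat \<Rightarrow> 's \<Rightarrow> 's" where
  "drop_second X 0 m x = x"
| "drop_second X (Suc k) m x = drop_second X k (m - 1) (face X m 1 x)"

text \<open>The edge from vertex j to vertex j+1 of an n-simplex (j < n).\<close>
definition edge :: "'s sset \<Rightarrow> nat \<Rightarrow> 's \<Rightarrow> nat \<Rightarrow> 's" where
  "edge X n x j = drop_first X j (Suc j) (drop_last X (n - Suc j) n x)"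

definition enum :: "'s sset \<Rightarrow> nat \<Rightarrow> 's \<Rightarrow> 's list" where
  "enum X n x = map (edge X n x) [0..<n]"

definition N_sset :: "'s sset \<Rightarrow> bool" where
  "N_sset X \<longleftrightarrow> (\<forall>n. inj_on (enum X n) (simp X n))"

text \<open>Product operator: the edge from vertex 0 to vertex n.\<close>
definition prod_op :: "'s sset \<Rightarrow> nat \<Rightarrow> 's \<Rightarrow> 's" where
  "prod_op X n x = (if n = 0 then degen X 0 0 x else drop_second X (n - 1) n x)"

definition opposite :: "'s sset \<Rightarrow> 's sset" where
  "opposite X = \<lparr> simp = simp X, face = (\<lambda>n i. face X n (n - i)),
                  degen = (\<lambda>n i. degen X n (n - i)) \<rparr>"

definition inversion :: "'s sset \<Rightarrow> (nat \<Rightarrow> 's \<Rightarrow> 's) \<Rightarrow> bool" where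
  "inversion X \<nu> \<longleftrightarrow>
     sset_map X (opposite X) \<nu>
   \<and> (\<forall>n. \<forall>x\<in>simp X n. \<nu> n (\<nu> n x) = x)
   \<and> (\<forall>n. \<forall>x\<in>simp X n. 1 \<le> n \<longrightarrow>
        (\<exists>y\<in>simp X (2 * n). enum X (2 * n) y = enum X n (\<nu> n x) @ enum X n x
            \<and> prod_op X (2 * n) y = sset_unit X))"

definition red_N_inv_sset :: "'s sset \<Rightarrow> bool" where
  "red_N_inv_sset X \<longleftrightarrow> is_sset X \<and> reduced X \<and> N_sset X \<and> (\<exists>\<nu>. inversion X \<nu>)"

definition nerve :: "('a, 'z) partial_group_scheme \<Rightarrow> 'a list sset" where
  "nerve M = \<lparr> simp = (\<lambda>n. {w \<in> pg_dom M. length w = n}),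
     face = (\<lambda>n i w. if i = 0 then tl w else if i = n then butlast w
                     else take (i - 1) w @ [pg_prod M [w ! (i - 1), w ! i]] @ drop (Suc i) w),
     degen = (\<lambda>n i w. take i w @ [pg_unit M] @ drop i w) \<rparr>"

definition nerve_map :: "('a \<Rightarrow> 'b) \<Rightarrow> nat \<Rightarrow> 'a list \<Rightarrow> 'b list" where
  "nerve_map \<beta> n w = map \<beta> w"

end

theory Submission
  imports Defs
begin

text \<open>
  The nerve of a partial group \<open>M\<close> has the words of length \<open>n\<close> in \<open>D\<close> as its
  \<open>n\<close>-simplices: inner faces multiply adjacent letters, outer faces drop the first or last letter,
  degeneracies insert the unit, and \<open>u \<mapsto> u\<^sup>-\<^sup>1\<close> is an inversion. Its enumerating operator just
  splits a word into letters, so it is injective, and a simplicial map between nerves, which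
  commutes with \<open>E\<close> and \<open>\<Pi>\<close>, is the letterwise extension of its action on \<open>1\<close>-simplices; that
  action is a morphism of partial groups.

  Conversely, for a reduced \<open>N\<close>-simplicial set \<open>X\<close> with inversion \<open>\<nu>\<close>, the edge sequences
  \<open>E(x)\<close> of all simplices form the domain of a partial group on \<open>X\<^sub>1\<close> whose product is \<open>\<Pi>(x)\<close>
  (well defined because \<open>E\<close> is injective) and whose inversion is \<open>\<nu>\<^sub>1\<close>. The one substantial
  axiom \<open>\<Pi>(u \<circ> v \<circ> w) = \<Pi>(u \<circ> \<Pi>(v) \<circ> w)\<close> holds because the edges of \<open>v\<close> in a simplex can be
  collapsed into a single edge by inner faces (or a degeneracy, if \<open>v\<close> is empty), and these
  do not change \<open>\<Pi>\<close>. Then \<open>E\<close> is a levelwise bijective simplicial map from \<open>X\<close> to the nerve,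
  hence an isomorphism.
\<close>

section \<open>Iterated faces of simplicial sets\<close>

lemma drop_last_add: "drop_last X (k + l) m x = drop_last X k (m - l) (drop_last X l m x)"
  by (induction l arbitrary: m x) simp_all

lemma drop_first_add: "drop_first X (k + l) m x = drop_first X k (m - l) (drop_first X l m x)"
  by (induction l arbitrary: m x) simp_all

lemma drop_last_Suc': "drop_last X (Suc k) m x = face X (m - k) (m - k) (drop_last X k m x)"
  using drop_last_add[of X 1 k m x] by simp

lemma drop_first_Suc': "drop_first X (Suc k) m x = face X (m - k) 0 (drop_first X k m x)"
  using drop_first_add[of X 1 k m x] by simp

text \<open>The face of an \<open>n\<close>-simplex spanned by its vertices \<open>a, \<dots>, b\<close>.\<close>
definition subsimplex :: "'s sset \<Rightarrow> nat \<Rightarrow> 's \<Rightarrow> nat \<Rightarrow> nat \<Rightarrow> 's" where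
  "subsimplex X n x a b = drop_first X a b (drop_last X (n - b) n x)"

lemma edge_eq_subsimplex: "edge X n x j = subsimplex X n x j (Suc j)"
  by (simp add: edge_def subsimplex_def)

lemma length_enum [simp]: "length (enum X n x) = n"
  by (simp add: enum_def)

lemma nth_enum: "j < n \<Longrightarrow> enum X n x ! j = subsimplex X n x j (Suc j)"
  by (simp add: enum_def edge_eq_subsimplex)

lemma enum_0: "enum X 0 x = []"
  by (simp add: enum_def)

lemma enum_1: "enum X 1 x = [x]"
  by (simp add: enum_def edge_def)

lemma prod_op_2: "prod_op X 2 x = face X 2 1 x"
  by (simp add: prod_op_def numeral_2_eq_2)

lemma prod_op_face_1: "prod_op X (Suc k) (face X (Suc (Suc k)) 1 x) = prod_op X (Suc (Suc k)) x"
  by (simp add: prod_op_def)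

lemma sset_map_in_simp: "sset_map X Y f \<Longrightarrow> x \<in> simp X n \<Longrightarrow> f n x \<in> simp Y n"
  unfolding sset_map_def by blast

lemma sset_map_face:
  "sset_map X Y f \<Longrightarrow> x \<in> simp X (Suc n) \<Longrightarrow> i \<le> Suc n \<Longrightarrow>
    f n (face X (Suc n) i x) = face Y (Suc n) i (f (Suc n) x)"
  unfolding sset_map_def by (metis Suc_le_mono diff_Suc_1 le0 One_nat_def)

lemma sset_map_degen:
  "sset_map X Y f \<Longrightarrow> x \<in> simp X n \<Longrightarrow> i \<le> n \<Longrightarrow>
    f (Suc n) (degen X n i x) = degen Y n i (f n x)"
  unfolding sset_map_def by blast

locale simplicial_set =
  fixes X :: "'s sset"
  assumes face_in_simp: "\<And>n i x. x \<in> simp X n \<Longrightarrow> 1 \<le> n \<Longrightarrow> i \<le> n \<Longrightarrow> face X n i x \<in> simp X (n - 1)"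
    and degen_in_simp: "\<And>n i x. x \<in> simp X n \<Longrightarrow> i \<le> n \<Longrightarrow> degen X n i x \<in> simp X (Suc n)"
    and face_face: "\<And>n i j x. x \<in> simp X n \<Longrightarrow> 2 \<le> n \<Longrightarrow> i < j \<Longrightarrow> j \<le> n \<Longrightarrow>
      face X (n - 1) i (face X n j x) = face X (n - 1) (j - 1) (face X n i x)"
    and face_degen_less: "\<And>n i j x. x \<in> simp X n \<Longrightarrow> i < j \<Longrightarrow> j \<le> n \<Longrightarrow>
      face X (Suc n) i (degen X n j x) = degen X (n - 1) (j - 1) (face X n i x)"
    and face_degen_self: "\<And>n j x. x \<in> simp X n \<Longrightarrow> j \<le> n \<Longrightarrow> face X (Suc n) j (degen X n j x) = x"
    and face_Suc_degen_self: "\<And>n j x. x \<in> simp X n \<Longrightarrow> j \<le> n \<Longrightarrow>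
      face X (Suc n) (Suc j) (degen X n j x) = x"
    and face_degen_greater: "\<And>n i j x. x \<in> simp X n \<Longrightarrow> Suc j < i \<Longrightarrow> i \<le> Suc n \<Longrightarrow>
      face X (Suc n) i (degen X n j x) = degen X (n - 1) j (face X n (i - 1) x)"
    and degen_degen: "\<And>n i j x. x \<in> simp X n \<Longrightarrow> i \<le> j \<Longrightarrow> j \<le> n \<Longrightarrow>
      degen X (Suc n) i (degen X n j x) = degen X (Suc n) (Suc j) (degen X n i x)"

lemma simplicial_set_iff_is_sset: "simplicial_set X \<longleftrightarrow> is_sset X"
  unfolding simplicial_set_def is_sset_def by (intro iffI conjI allI impI; elim conjE; metis)

context simplicial_set
begin

lemma face_Suc_in_simp: "x \<in> simp X (Suc n) \<Longrightarrow> i \<le> Suc n \<Longrightarrow> face X (Suc n) i x \<in> simp X n"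
  using face_in_simp[of x "Suc n" i] by simp

lemma drop_last_in_simp: "x \<in> simp X m \<Longrightarrow> k \<le> m \<Longrightarrow> drop_last X k m x \<in> simp X (m - k)"
proof (induction k arbitrary: m x)
  case (Suc k)
  then obtain m' where "m = Suc m'" by (cases m) auto
  with Suc show ?case by (simp add: face_Suc_in_simp)
qed simp

lemma drop_first_in_simp: "x \<in> simp X m \<Longrightarrow> k \<le> m \<Longrightarrow> drop_first X k m x \<in> simp X (m - k)"
proof (induction k arbitrary: m x)
  case (Suc k)
  then obtain m' where "m = Suc m'" by (cases m) auto
  with Suc show ?case by (simp add: face_Suc_in_simp)
qed simp

lemma drop_second_in_simp: "x \<in> simp X m \<Longrightarrow> k < m \<Longrightarrow> drop_second X k m x \<in> simp X (m - k)"
proof (induction k arbitrary: m x)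
  case (Suc k)
  then obtain m' where "m = Suc m'" by (cases m) auto
  with Suc show ?case by (simp add: face_Suc_in_simp)
qed simp

lemma subsimplex_in_simp:
  "x \<in> simp X n \<Longrightarrow> a \<le> b \<Longrightarrow> b \<le> n \<Longrightarrow> subsimplex X n x a b \<in> simp X (b - a)"
  unfolding subsimplex_def using drop_last_in_simp drop_first_in_simp
  by (metis diff_diff_cancel diff_le_self)

lemma prod_op_in_simp: "x \<in> simp X n \<Longrightarrow> prod_op X n x \<in> simp X 1"
  using drop_second_in_simp[of x n "n - 1"] degen_in_simp[of x 0 0] by (auto simp: prod_op_def)

lemma drop_first_face_last:
  "x \<in> simp X m \<Longrightarrow> a < m \<Longrightarrow>
    drop_first X a (m - 1) (face X m m x) = face X (m - a) (m - a) (drop_first X a m x)"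
proof (induction a arbitrary: m x)
  case (Suc a)
  then obtain p where m: "m = Suc (Suc p)" by (cases m; cases "m - 1") auto
  with Suc.prems have x: "x \<in> simp X (Suc (Suc p))" by simp
  have "face X (Suc p) 0 (face X m m x) = face X (Suc p) (Suc p) (face X m 0 x)"
    using face_face[OF x, of 0 m] m by simp
  with Suc.IH[of "face X m 0 x" "Suc p"] Suc.prems m face_Suc_in_simp[OF x, of 0]
  show ?case by simp
qed simp

lemma drop_first_drop_last:
  "x \<in> simp X m \<Longrightarrow> a + k \<le> m \<Longrightarrow>
    drop_first X a (m - k) (drop_last X k m x) = drop_last X k (m - a) (drop_first X a m x)"
proof (induction k arbitrary: m x)
  case (Suc k)
  then obtain p where m: "m = Suc p" by (cases m) auto
  with Suc.prems have x: "x \<in> simp X (Suc p)" by simp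
  have "drop_first X a (m - Suc k) (drop_last X (Suc k) m x)
      = drop_last X k (p - a) (drop_first X a p (face X m m x))"
    using Suc.IH[of "face X m m x" p] Suc.prems m face_Suc_in_simp[OF x] by simp
  also have "drop_first X a p (face X m m x) = face X (m - a) (m - a) (drop_first X a m x)"
    using drop_first_face_last[OF x, of a] Suc.prems m by simp
  finally show ?case
    using m Suc.prems by (simp add: Suc_diff_le)
qed simp

lemma subsimplex_subsimplex:
  assumes x: "x \<in> simp X n" and "a \<le> b" "b \<le> n" "c \<le> d" "d \<le> b - a"
  shows "subsimplex X (b - a) (subsimplex X n x a b) c d = subsimplex X n x (a + c) (a + d)"
proof -
  let ?y = "drop_last X (n - b) n x"
  have y: "?y \<in> simp X b"
    using drop_last_in_simp[OF x, of "n - b"] assms by simp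
  have "drop_last X (b - a - d) (b - a) (drop_first X a b ?y)
      = drop_first X a (a + d) (drop_last X (b - a - d) b ?y)"
    using drop_first_drop_last[OF y, of a "b - a - d"] assms by simp
  moreover have "drop_last X (b - a - d) b ?y = drop_last X (n - (a + d)) n x"
    using drop_last_add[of X "b - a - d" "n - b" n x] assms by (simp add: add.commute)
  moreover have "drop_first X c d (drop_first X a (a + d) z) = drop_first X (a + c) (a + d) z" for z
    using drop_first_add[of X c a "a + d" z] by (simp add: add.commute)
  ultimately show ?thesis
    using assms by (simp add: subsimplex_def)
qed

lemma enum_subsimplex:
  assumes x: "x \<in> simp X n" and "a \<le> b" "b \<le> n"
  shows "enum X (b - a) (subsimplex X n x a b) = take (b - a) (drop a (enum X n x))"
proof (rule nth_equalityI)
  fix j assume "j < length (enum X (b - a) (subsimplex X n x a b))"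
  then have j: "j < b - a" by simp
  have "enum X (b - a) (subsimplex X n x a b) ! j
      = subsimplex X (b - a) (subsimplex X n x a b) j (Suc j)"
    by (rule nth_enum[OF j])
  also have "\<dots> = subsimplex X n x (a + j) (a + Suc j)"
    using subsimplex_subsimplex[OF x assms(2,3), of j "Suc j"] j by simp
  also have "\<dots> = enum X n x ! (a + j)"
    using nth_enum[of "a + j" n X x] j assms by simp
  finally show "enum X (b - a) (subsimplex X n x a b) ! j = take (b - a) (drop a (enum X n x)) ! j"
    using j assms by simp
qed (use assms in simp)

lemma set_enum_subset: "x \<in> simp X n \<Longrightarrow> set (enum X n x) \<subseteq> simp X 1"
proof
  fix e assume x: "x \<in> simp X n" and "e \<in> set (enum X n x)"
  then obtain j where "j < n" and "e = subsimplex X n x j (Suc j)"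
    by (auto simp: in_set_conv_nth nth_enum)
  then show "e \<in> simp X 1"
    using subsimplex_in_simp[OF x, of j "Suc j"] by simp
qed

lemma drop_last_face:
  assumes x: "x \<in> simp X n" and i: "i \<le> n"
  shows "k < n \<Longrightarrow> drop_last X k (n - 1) (face X n i x) =
    (if i + k < n then face X (n - k) i (drop_last X k n x) else drop_last X (Suc k) n x)"
proof (induction k)
  case 0
  with i show ?case by (cases "i = n") simp_all
next
  case (Suc k)
  let ?z = "drop_last X k n x"
  have z: "?z \<in> simp X (n - k)"
    using drop_last_in_simp[OF x, of k] Suc.prems by simp
  have IH: "drop_last X k (n - 1) (face X n i x) =
      (if i + k < n then face X (n - k) i ?z else drop_last X (Suc k) n x)"
    using Suc by simp
  have top_face: "face X (n - k - 1) (n - k - 1) (face X (n - k) i ?z)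
      = face X (n - k - 1) i (drop_last X (Suc k) n x)" if "i < n - k"
    using face_face[OF z _ that] Suc.prems drop_last_Suc'[of X k n x] by simp
  consider "i + Suc k < n" | "i + Suc k = n" | "n \<le> i + k"
    by linarith
  then show ?case
  proof cases
    case 1
    then show ?thesis
      using IH top_face drop_last_Suc'[of X k "n - 1"] by (simp add: diff_diff_left)
  next
    case 2
    then have "n - Suc k = i" by simp
    with 2 show ?thesis
      using IH top_face drop_last_Suc'[of X k "n - 1"] drop_last_Suc'[of X "Suc k" n x]
      by (simp add: diff_diff_left)
  next
    case 3
    then show ?thesis
      using IH drop_last_Suc'[of X k "n - 1"] drop_last_Suc'[of X "Suc k" n x]
      by (simp add: diff_diff_left)
  qed
qed

lemma drop_first_face:
  assumes x: "x \<in> simp X n" and i: "i \<le> n"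
  shows "a < n \<Longrightarrow> drop_first X a (n - 1) (face X n i x) =
    (if a < i then face X (n - a) (i - a) (drop_first X a n x) else drop_first X (Suc a) n x)"
proof (induction a)
  case 0
  then show ?case by (cases "i = 0") simp_all
next
  case (Suc a)
  let ?z = "drop_first X a n x"
  have z: "?z \<in> simp X (n - a)"
    using drop_first_in_simp[OF x, of a] Suc.prems by simp
  have IH: "drop_first X a (n - 1) (face X n i x) =
      (if a < i then face X (n - a) (i - a) ?z else drop_first X (Suc a) n x)"
    using Suc by simp
  have first_face: "face X (n - a - 1) 0 (face X (n - a) (i - a) ?z)
      = face X (n - a - 1) (i - a - 1) (drop_first X (Suc a) n x)" if "a < i"
    using face_face[OF z _ _ _, of 0 "i - a"] that i Suc.prems drop_first_Suc'[of X a n x] by simp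
  consider "Suc a < i" | "i = Suc a" | "i \<le> a"
    by linarith
  then show ?case
  proof cases
    case 1
    then show ?thesis
      using IH first_face drop_first_Suc'[of X a "n - 1"] by (simp add: diff_diff_left)
  next
    case 2
    then show ?thesis
      using IH first_face drop_first_Suc'[of X a "n - 1"] drop_first_Suc'[of X "Suc a" n x]
      by (simp add: diff_diff_left)
  next
    case 3
    then show ?thesis
      using IH drop_first_Suc'[of X a "n - 1"] drop_first_Suc'[of X "Suc a" n x]
      by (simp add: diff_diff_left)
  qed
qed

lemma subsimplex_face:
  assumes x: "x \<in> simp X n" and i: "i \<le> n" and ab: "a \<le> b" "b < n"
  shows "subsimplex X (n - 1) (face X n i x) a b =
    (if b < i then subsimplex X n x a b else if i \<le> a then subsimplex X n x (Suc a) (Suc b)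
     else face X (Suc b - a) (i - a) (subsimplex X n x a (Suc b)))"
proof -
  let ?y = "drop_last X (n - Suc b) n x"
  have y: "?y \<in> simp X (Suc b)"
    using drop_last_in_simp[OF x, of "n - Suc b"] ab by simp
  have "drop_last X (n - Suc b) (n - 1) (face X n i x)
      = (if b < i then drop_last X (n - b) n x else face X (Suc b) i ?y)"
    using drop_last_face[OF x i, of "n - Suc b"] ab by (auto simp: Suc_diff_Suc)
  then show ?thesis
    using drop_first_face[OF y, of i a] ab by (auto simp: subsimplex_def)
qed

lemma nth_enum_face:
  assumes x: "x \<in> simp X n" and i: "i \<le> n" and j: "Suc j < n"
  shows "enum X (n - 1) (face X n i x) ! j =
    (if Suc j < i then enum X n x ! j else if i \<le> j then enum X n x ! (Suc j)
     else face X 2 1 (subsimplex X n x j (Suc (Suc j))))"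
proof -
  have "enum X (n - 1) (face X n i x) ! j = subsimplex X (n - 1) (face X n i x) j (Suc j)"
    using nth_enum[of j "n - 1" X] j by simp
  moreover have "i - j = 1" if "\<not> Suc j < i" "\<not> i \<le> j"
    using that by simp
  ultimately show ?thesis
    using subsimplex_face[OF x i, of j "Suc j"] nth_enum[of j n X x] nth_enum[of "Suc j" n X x] j
    by (auto simp: numeral_2_eq_2)
qed

lemma drop_last_degen:
  assumes x: "x \<in> simp X n" and i: "i \<le> n"
  shows "k \<le> n \<Longrightarrow> drop_last X k (Suc n) (degen X n i x) =
    (if k + i \<le> n then degen X (n - k) i (drop_last X k n x) else drop_last X (k - 1) n x)"
proof (induction k)
  case 0
  with i show ?case by simp
next
  case (Suc k)
  let ?z = "drop_last X k n x"
  have z: "?z \<in> simp X (n - k)"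
    using drop_last_in_simp[OF x, of k] Suc.prems by simp
  have IH: "drop_last X k (Suc n) (degen X n i x) =
      (if k + i \<le> n then degen X (n - k) i ?z else drop_last X (k - 1) n x)"
    using Suc by simp
  have step: "drop_last X (Suc k) (Suc n) (degen X n i x)
      = face X (Suc (n - k)) (Suc (n - k)) (drop_last X k (Suc n) (degen X n i x))"
    using drop_last_Suc'[of X k "Suc n"] Suc.prems by (simp add: Suc_diff_le)
  consider "Suc k + i \<le> n" | "k + i = n" | "n < k + i"
    by linarith
  then show ?case
  proof cases
    case 1
    then have "face X (Suc (n - k)) (Suc (n - k)) (degen X (n - k) i ?z)
        = degen X (n - Suc k) i (drop_last X (Suc k) n x)"
      using face_degen_greater[OF z, of i "Suc (n - k)"] drop_last_Suc'[of X k n x] by simp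
    with 1 show ?thesis
      using IH step by simp
  next
    case 2
    then have "n - k = i" by simp
    with 2 show ?thesis
      using IH step face_Suc_degen_self[OF z, of i] by simp
  next
    case 3
    then obtain k' where "k = Suc k'"
      using i by (cases k) auto
    with 3 show ?thesis
      using IH step drop_last_Suc'[of X k' n x] Suc.prems by (simp add: Suc_diff_Suc)
  qed
qed

lemma drop_first_degen:
  assumes x: "x \<in> simp X m" and i: "i \<le> m"
  shows "a \<le> m \<Longrightarrow> drop_first X a (Suc m) (degen X m i x) =
    (if a \<le> i then degen X (m - a) (i - a) (drop_first X a m x) else drop_first X (a - 1) m x)"
proof (induction a)
  case 0
  then show ?case by simp
next
  case (Suc a)
  let ?z = "drop_first X a m x"
  have z: "?z \<in> simp X (m - a)"
    using drop_first_in_simp[OF x, of a] Suc.prems by simp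
  have IH: "drop_first X a (Suc m) (degen X m i x) =
      (if a \<le> i then degen X (m - a) (i - a) ?z else drop_first X (a - 1) m x)"
    using Suc by simp
  have step: "drop_first X (Suc a) (Suc m) (degen X m i x)
      = face X (Suc (m - a)) 0 (drop_first X a (Suc m) (degen X m i x))"
    using drop_first_Suc'[of X a "Suc m"] Suc.prems by (simp add: Suc_diff_le)
  consider "a < i" | "i = a" | "i < a"
    by linarith
  then show ?case
  proof cases
    case 1
    then have "face X (Suc (m - a)) 0 (degen X (m - a) (i - a) ?z)
        = degen X (m - Suc a) (i - Suc a) (drop_first X (Suc a) m x)"
      using face_degen_less[OF z, of 0 "i - a"] drop_first_Suc'[of X a m x] i by simp
    with 1 show ?thesis
      using IH step by simp
  next
    case 2
    then show ?thesis
      using IH step face_degen_self[OF z, of 0] by simp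
  next
    case 3
    then obtain a' where "a = Suc a'"
      by (cases a) auto
    with 3 show ?thesis
      using IH step drop_first_Suc'[of X a' m x] Suc.prems by (simp add: Suc_diff_Suc)
  qed
qed

lemma nth_enum_degen:
  assumes x: "x \<in> simp X n" and i: "i \<le> n" and j: "j \<le> n"
  shows "enum X (Suc n) (degen X n i x) ! j =
    (if j < i then enum X n x ! j else if j = i then degen X 0 0 (subsimplex X n x j j)
     else enum X n x ! (j - 1))"
proof -
  let ?y = "drop_last X (n - j) n x"
  have y: "?y \<in> simp X j"
    using drop_last_in_simp[OF x, of "n - j"] j by simp
  have "enum X (Suc n) (degen X n i x) ! j
      = drop_first X j (Suc j) (drop_last X (n - j) (Suc n) (degen X n i x))"
    using nth_enum[of j "Suc n" X] j by (simp add: subsimplex_def)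
  also have "drop_last X (n - j) (Suc n) (degen X n i x)
      = (if i \<le> j then degen X j i ?y else drop_last X (n - Suc j) n x)"
    using drop_last_degen[OF x i, of "n - j"] j by auto
  finally have e: "enum X (Suc n) (degen X n i x) ! j = drop_first X j (Suc j)
      (if i \<le> j then degen X j i ?y else drop_last X (n - Suc j) n x)" .
  consider "j < i" | "j = i" | "i < j"
    by linarith
  then show ?thesis
  proof cases
    case 1
    with e i show ?thesis
      using nth_enum[of j n X x] by (simp add: subsimplex_def)
  next
    case 2
    with e show ?thesis
      using drop_first_degen[OF y, of i j] by (simp add: subsimplex_def)
  next
    case 3
    with e j show ?thesis
      using drop_first_degen[OF y, of i j] nth_enum[of "j - 1" n X x] by (simp add: subsimplex_def)
  qed
qed

lemma drop_second_face:
  "x \<in> simp X (Suc m) \<Longrightarrow> 1 \<le> i \<Longrightarrow> i \<le> m \<Longrightarrow> i - 1 \<le> k \<Longrightarrow> k < m \<Longrightarrow>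
   drop_second X k m (face X (Suc m) i x) = drop_second X (Suc k) (Suc m) x"
proof (induction k arbitrary: i x m)
  case 0
  then have "i = 1" by simp
  then show ?case by simp
next
  case (Suc k)
  show ?case
  proof (cases "i = 1")
    case True
    then show ?thesis by simp
  next
    case False
    then have i2: "2 \<le> i" using Suc by simp
    obtain p where m: "m = Suc p" using Suc by (cases m) auto
    have "face X m 1 (face X (Suc m) i x) = face X m (i - 1) (face X (Suc m) 1 x)"
      using face_face[OF Suc.prems(1), of 1 i] i2 Suc.prems by simp
    moreover have "drop_second X k p (face X (Suc p) (i - 1) (face X (Suc m) 1 x))
        = drop_second X (Suc k) (Suc p) (face X (Suc m) 1 x)"
      using Suc.IH[where i="i - 1" and x="face X (Suc m) 1 x" and m=p]
        face_Suc_in_simp[OF Suc.prems(1), of 1] Suc.prems i2 m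
      by simp
    ultimately show ?thesis using m by simp
  qed
qed

lemma drop_second_degen:
  "x \<in> simp X m \<Longrightarrow> i \<le> m \<Longrightarrow> 1 \<le> m \<Longrightarrow> i \<le> Suc k \<Longrightarrow> k < m \<Longrightarrow>
   drop_second X (Suc k) (Suc m) (degen X m i x) = drop_second X k m x"
proof (induction k arbitrary: i x m)
  case 0
  then have "i = 0 \<or> i = 1" by auto
  then show ?case
  proof
    assume "i = 0" then show ?thesis using face_Suc_degen_self[OF 0(1), of 0] by simp
  next
    assume "i = 1" then show ?thesis using face_degen_self[OF 0(1), of 1] 0 by simp
  qed
next
  case (Suc k)
  show ?case
  proof (cases "i \<le> 1")
    case True
    then have "i = 0 \<or> i = 1" by auto
    then have "face X (Suc m) 1 (degen X m i x) = x"
      using face_Suc_degen_self[OF Suc.prems(1), of 0] face_degen_self[OF Suc.prems(1), of 1] Suc.prems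
      by auto
    then show ?thesis by simp
  next
    case False
    obtain p where m: "m = Suc p" using Suc by (cases m) auto
    have "face X (Suc m) 1 (degen X m i x) = degen X p (i - 1) (face X m 1 x)"
      using face_degen_less[OF Suc.prems(1), of 1 i] False Suc.prems m by simp
    moreover have "drop_second X (Suc k) (Suc p) (degen X p (i - 1) (face X m 1 x))
       = drop_second X k p (face X m 1 x)"
      using Suc.IH[where i="i - 1" and x="face X m 1 x" and m=p] face_Suc_in_simp[of x p 1]
        Suc.prems m False
      by simp
    ultimately show ?thesis using m by simp
  qed
qed

lemma prod_op_face:
  "x \<in> simp X n \<Longrightarrow> 0 < i \<Longrightarrow> i < n \<Longrightarrow> prod_op X (n - 1) (face X n i x) = prod_op X n x"
proof -
  assume x: "x \<in> simp X n" and i: "0 < i" "i < n"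
  then obtain p where n: "n = Suc (Suc p)" by (cases n; cases "n - 1") auto
  have "drop_second X p (Suc p) (face X (Suc (Suc p)) i x) = drop_second X (Suc p) (Suc (Suc p)) x"
    using drop_second_face[of x "Suc p" i p] x i n by simp
  then show ?thesis using n by (simp add: prod_op_def)
qed

lemma prod_op_degen: "x \<in> simp X n \<Longrightarrow> i \<le> n \<Longrightarrow> prod_op X (Suc n) (degen X n i x) = prod_op X n x"
proof -
  assume x: "x \<in> simp X n" and i: "i \<le> n"
  show ?thesis
  proof (cases n)
    case 0
    then show ?thesis using i by (simp add: prod_op_def)
  next
    case (Suc p)
    have "drop_second X (Suc p) (Suc (Suc p)) (degen X (Suc p) i x) = drop_second X p (Suc p) x"
      using drop_second_degen[of x "Suc p" i p] x i Suc by simp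
    then show ?thesis using Suc by (simp add: prod_op_def)
  qed
qed

lemma take_enum_face:
  assumes x: "x \<in> simp X n" and i: "1 \<le> i" "i \<le> n"
  shows "take (i - 1) (enum X (n - 1) (face X n i x)) = take (i - 1) (enum X n x)"
proof (rule nth_equalityI)
  show "length (take (i - 1) (enum X (n - 1) (face X n i x))) = length (take (i - 1) (enum X n x))"
    using i by simp
  fix j assume "j < length (take (i - 1) (enum X (n - 1) (face X n i x)))"
  then have j: "j < i - 1" "Suc j < n" using i by auto
  then have "Suc j < i" by simp
  then show "take (i - 1) (enum X (n - 1) (face X n i x)) ! j = take (i - 1) (enum X n x) ! j"
    using nth_enum_face[OF x i(2) j(2)] j by simp
qed

lemma drop_enum_face:
  assumes x: "x \<in> simp X n" and i: "i \<le> n"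
  shows "drop i (enum X (n - 1) (face X n i x)) = drop (Suc i) (enum X n x)"
proof (rule nth_equalityI)
  show "length (drop i (enum X (n - 1) (face X n i x))) = length (drop (Suc i) (enum X n x))"
    using i by simp
  fix t assume "t < length (drop i (enum X (n - 1) (face X n i x)))"
  then have t: "Suc (i + t) < n" using i by auto
  show "drop i (enum X (n - 1) (face X n i x)) ! t = drop (Suc i) (enum X n x) ! t"
    using nth_enum_face[OF x i t] t by simp
qed

lemma enum_degen:
  assumes x: "x \<in> simp X n" and i: "i \<le> n"
  shows "enum X (Suc n) (degen X n i x)
    = take i (enum X n x) @ [prod_op X 0 (subsimplex X n x i i)] @ drop i (enum X n x)"
proof (rule nth_equalityI)
  fix j assume "j < length (enum X (Suc n) (degen X n i x))"
  then have j: "j \<le> n" by simp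
  then show "enum X (Suc n) (degen X n i x) ! j
      = (take i (enum X n x) @ [prod_op X 0 (subsimplex X n x i i)] @ drop i (enum X n x)) ! j"
    using nth_enum_degen[OF x i j] i by (auto simp: nth_append min_def prod_op_def)
qed (use i in simp)

lemma segment_collapse_face:
  assumes x: "x \<in> simp X n" and k: "1 \<le> k" "a + Suc k \<le> n"
  shows "take a (enum X (n - 1) (face X n (Suc a) x))
      @ [prod_op X k (subsimplex X (n - 1) (face X n (Suc a) x) a (a + k))]
      @ drop (a + k) (enum X (n - 1) (face X n (Suc a) x))
    = take a (enum X n x) @ [prod_op X (Suc k) (subsimplex X n x a (a + Suc k))]
      @ drop (a + Suc k) (enum X n x)"
proof -
  let ?y = "face X n (Suc a) x"
  obtain k' where k': "k = Suc k'"
    using k by (cases k) auto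
  have "subsimplex X (n - 1) ?y a (a + k) = face X (Suc k) 1 (subsimplex X n x a (a + Suc k))"
    using subsimplex_face[OF x, of "Suc a" a "a + k"] k by simp
  then have "prod_op X k (subsimplex X (n - 1) ?y a (a + k))
      = prod_op X (Suc k) (subsimplex X n x a (a + Suc k))"
    using prod_op_face_1[of X k' "subsimplex X n x a (a + Suc k)"] k' by simp
  moreover have "take a (enum X (n - 1) ?y) = take a (enum X n x)"
    using take_enum_face[OF x, of "Suc a"] k by simp
  moreover have "drop (a + k) (enum X (n - 1) ?y) = drop (a + Suc k) (enum X n x)"
  proof -
    have "drop (a + k) (enum X (n - 1) ?y) = drop k' (drop (Suc a) (enum X (n - 1) ?y))"
      using k' by (simp add: add.commute)
    also have "\<dots> = drop k' (drop (Suc (Suc a)) (enum X n x))"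
      using drop_enum_face[OF x, of "Suc a"] k by simp
    also have "\<dots> = drop (a + Suc k) (enum X n x)"
      using k' by (simp add: add.commute)
    finally show ?thesis .
  qed
  ultimately show ?thesis
    by simp
qed

text \<open>Collapsing the \<open>k\<close> edges from vertex \<open>a\<close> to vertex \<open>a + k\<close> into their product: for
  \<open>k = 0\<close> this is a degeneracy, otherwise the inner face at vertex \<open>a + 1\<close> reduces \<open>k\<close> by one.\<close>
lemma segment_collapse:
  "x \<in> simp X n \<Longrightarrow> a + k \<le> n \<Longrightarrow>
    \<exists>x'\<in>simp X (Suc n - k). enum X (Suc n - k) x'
      = take a (enum X n x) @ [prod_op X k (subsimplex X n x a (a + k))] @ drop (a + k) (enum X n x)
    \<and> prod_op X (Suc n - k) x' = prod_op X n x"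
proof (induction k arbitrary: x n)
  case 0
  then have "a \<le> n" by simp
  with 0 show ?case
    using enum_degen[of x n a] degen_in_simp[of x n a] prod_op_degen[of x n a]
    by (intro bexI[of _ "degen X n a x"]) simp_all
next
  case (Suc k)
  show ?case
  proof (cases "k = 0")
    case True
    with Suc.prems
    have "take a (enum X n x) @ [enum X n x ! a] @ drop (Suc a) (enum X n x) = enum X n x"
      using id_take_nth_drop[of a "enum X n x"] by simp
    with Suc.prems True show ?thesis
      using nth_enum[of a n X x] by (intro bexI[of _ x]) (auto simp: prod_op_def)
  next
    case False
    let ?y = "face X n (Suc a) x"
    from Suc.prems False have n: "Suc a < n" "a + k \<le> n - 1" by auto
    have y: "?y \<in> simp X (n - 1)"
      using face_in_simp[OF Suc.prems(1)] n by simp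
    have dim: "Suc (n - 1) - k = Suc n - Suc k"
      using n by simp
    obtain x' where "x' \<in> simp X (Suc n - Suc k)"
      and "enum X (Suc n - Suc k) x' = take a (enum X (n - 1) ?y)
        @ [prod_op X k (subsimplex X (n - 1) ?y a (a + k))] @ drop (a + k) (enum X (n - 1) ?y)"
      and "prod_op X (Suc n - Suc k) x' = prod_op X (n - 1) ?y"
      using Suc.IH[OF y n(2)] unfolding dim by blast
    moreover have "prod_op X (n - 1) ?y = prod_op X n x"
      using prod_op_face[OF Suc.prems(1)] n by simp
    ultimately show ?thesis
      using segment_collapse_face[OF Suc.prems(1), of k a] False Suc.prems
      by (intro bexI[of _ x']) simp_all
  qed
qed

lemma map_drop_last:
  assumes f: "sset_map X Y f"
  shows "x \<in> simp X m \<Longrightarrow> k \<le> m \<Longrightarrow> f (m - k) (drop_last X k m x) = drop_last Y k m (f m x)"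
proof (induction k arbitrary: m x)
  case (Suc k)
  then obtain p where "m = Suc p" by (cases m) auto
  with Suc show ?case by (simp add: sset_map_face[OF f] face_Suc_in_simp)
qed simp

lemma map_drop_first:
  assumes f: "sset_map X Y f"
  shows "x \<in> simp X m \<Longrightarrow> k \<le> m \<Longrightarrow> f (m - k) (drop_first X k m x) = drop_first Y k m (f m x)"
proof (induction k arbitrary: m x)
  case (Suc k)
  then obtain p where "m = Suc p" by (cases m) auto
  with Suc show ?case by (simp add: sset_map_face[OF f] face_Suc_in_simp)
qed simp

lemma map_drop_second:
  assumes f: "sset_map X Y f"
  shows "x \<in> simp X m \<Longrightarrow> k < m \<Longrightarrow> f (m - k) (drop_second X k m x) = drop_second Y k m (f m x)"
proof (induction k arbitrary: m x)
  case (Suc k)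
  then obtain p where "m = Suc p" by (cases m) auto
  with Suc show ?case by (simp add: sset_map_face[OF f] face_Suc_in_simp)
qed simp

lemma map_subsimplex:
  assumes f: "sset_map X Y f" and x: "x \<in> simp X n" and ab: "a \<le> b" "b \<le> n"
  shows "f (b - a) (subsimplex X n x a b) = subsimplex Y n (f n x) a b"
proof -
  have y: "drop_last X (n - b) n x \<in> simp X b" using drop_last_in_simp[OF x, of "n - b"] ab by simp
  have "f (b - a) (subsimplex X n x a b) = drop_first Y a b (f b (drop_last X (n - b) n x))"
    unfolding subsimplex_def using map_drop_first[OF f y, of a] ab by simp
  also have "f b (drop_last X (n - b) n x) = drop_last Y (n - b) n (f n x)"
    using map_drop_last[OF f x, of "n - b"] ab by simp
  finally show ?thesis unfolding subsimplex_def .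
qed

lemma enum_map:
  assumes f: "sset_map X Y f" and x: "x \<in> simp X n"
  shows "enum Y n (f n x) = map (f 1) (enum X n x)"
proof (rule nth_equalityI)
  fix j assume "j < length (enum Y n (f n x))"
  then have j: "j < n" by (simp add: enum_def)
  have "enum Y n (f n x) ! j = subsimplex Y n (f n x) j (Suc j)"
    by (simp add: enum_def edge_eq_subsimplex j)
  also have "\<dots> = f 1 (subsimplex X n x j (Suc j))" using map_subsimplex[OF f x, of j "Suc j"] j
    by simp
  finally show "enum Y n (f n x) ! j = map (f 1) (enum X n x) ! j" using nth_enum[of j n X x] j
    by simp
qed (simp add: enum_def)

lemma prod_op_map:
  assumes f: "sset_map X Y f" and x: "x \<in> simp X n"
  shows "f 1 (prod_op X n x) = prod_op Y n (f n x)"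
proof (cases n)
  case 0
  with x show ?thesis
    using sset_map_degen[OF f] by (simp add: prod_op_def)
next
  case (Suc p)
  then show ?thesis
    using map_drop_second[OF f x, of p] by (simp add: prod_op_def)
qed

end

locale simplicial_set_reversal = simplicial_set +
  fixes \<nu> :: "nat \<Rightarrow> 's \<Rightarrow> 's"
  assumes reversal: "sset_map X (opposite X) \<nu>"
begin

lemma reversal_in_simp: "x \<in> simp X n \<Longrightarrow> \<nu> n x \<in> simp X n"
  using sset_map_in_simp[OF reversal] by (simp add: opposite_def)

lemma reversal_face:
  "x \<in> simp X (Suc n) \<Longrightarrow> i \<le> Suc n \<Longrightarrow>
    \<nu> n (face X (Suc n) i x) = face X (Suc n) (Suc n - i) (\<nu> (Suc n) x)"
  using sset_map_face[OF reversal] by (simp add: opposite_def)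

lemma reversal_drop_last:
  "x \<in> simp X m \<Longrightarrow> k \<le> m \<Longrightarrow> \<nu> (m - k) (drop_last X k m x) = drop_first X k m (\<nu> m x)"
proof (induction k arbitrary: m x)
  case (Suc k)
  then obtain p where "m = Suc p" by (cases m) auto
  with Suc show ?case by (simp add: reversal_face face_Suc_in_simp)
qed simp

lemma reversal_drop_first:
  "x \<in> simp X m \<Longrightarrow> k \<le> m \<Longrightarrow> \<nu> (m - k) (drop_first X k m x) = drop_last X k m (\<nu> m x)"
proof (induction k arbitrary: m x)
  case (Suc k)
  then obtain p where "m = Suc p" by (cases m) auto
  with Suc show ?case by (simp add: reversal_face face_Suc_in_simp)
qed simp

lemma reversal_subsimplex:
  assumes x: "x \<in> simp X n" and ab: "a \<le> b" "b \<le> n"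
  shows "\<nu> (b - a) (subsimplex X n x a b) = subsimplex X n (\<nu> n x) (n - b) (n - a)"
proof -
  have y: "drop_last X (n - b) n x \<in> simp X b" using drop_last_in_simp[OF x, of "n - b"] ab by simp
  have "\<nu> (b - a) (subsimplex X n x a b) = drop_last X a b (\<nu> b (drop_last X (n - b) n x))"
    unfolding subsimplex_def using reversal_drop_first[OF y, of a] ab by simp
  also have "\<nu> b (drop_last X (n - b) n x) = drop_first X (n - b) n (\<nu> n x)"
    using reversal_drop_last[OF x, of "n - b"] ab by simp
  also have "drop_last X a b (drop_first X (n - b) n (\<nu> n x))
      = drop_first X (n - b) (n - a) (drop_last X a n (\<nu> n x))"
    using drop_first_drop_last[OF reversal_in_simp[OF x], of "n - b" a] ab by simp
  finally show ?thesis unfolding subsimplex_def using ab by simp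
qed

lemma enum_reversal:
  assumes x: "x \<in> simp X n"
  shows "enum X n (\<nu> n x) = rev (map (\<nu> 1) (enum X n x))"
proof (rule nth_equalityI)
  fix j assume "j < length (enum X n (\<nu> n x))"
  then have j: "j < n" by simp
  have "rev (map (\<nu> 1) (enum X n x)) ! j = \<nu> 1 (enum X n x ! (n - Suc j))"
    using j by (simp add: rev_nth)
  also have "\<dots> = \<nu> (n - j - (n - Suc j)) (subsimplex X n x (n - Suc j) (n - j))"
    using nth_enum[of "n - Suc j" n X x] j by (simp add: Suc_diff_Suc)
  also have "\<dots> = subsimplex X n (\<nu> n x) j (Suc j)"
    using reversal_subsimplex[OF x, of "n - Suc j" "n - j"] j
    by (simp add: Suc_diff_Suc)
  finally show "enum X n (\<nu> n x) ! j = rev (map (\<nu> 1) (enum X n x)) ! j"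
    using nth_enum[of j n X] j by simp
qed simp

end

lemma (in simplicial_set) sset_iso_if_bij_betw:
  assumes f: "sset_map X Y f" and bij: "\<And>n. bij_betw (f n) (simp X n) (simp Y n)"
  shows "sset_iso X Y"
proof -
  define g where "g n = inv_into (simp X n) (f n)" for n
  have g: "g n y \<in> simp X n" "f n (g n y) = y" if "y \<in> simp Y n" for n y
    using that bij[of n] by (auto simp: g_def bij_betw_def inv_into_into f_inv_into_f)
  have gf: "g n (f n x) = x" if "x \<in> simp X n" for n x
    using that bij[of n] by (simp add: g_def bij_betw_def)
  have "sset_map Y X g"
    unfolding sset_map_def
  proof (intro conjI allI impI)
    fix n i y assume *: "1 \<le> n \<and> i \<le> n \<and> y \<in> simp Y n"
    then have "face Y n i y = f (n - 1) (face X n i (g n y))"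
      using f g unfolding sset_map_def by metis
    then show "g (n - 1) (face Y n i y) = face X n i (g n y)"
      using * g gf face_in_simp by simp
  next
    fix n i y assume *: "i \<le> n \<and> y \<in> simp Y n"
    then have "degen Y n i y = f (Suc n) (degen X n i (g n y))"
      using f g unfolding sset_map_def by metis
    then show "g (Suc n) (degen Y n i y) = degen X n i (g n y)"
      using * g gf degen_in_simp by simp
  qed (use g in blast)
  with f g gf show ?thesis
    unfolding sset_iso_def by blast
qed

section \<open>Partial groups\<close>

locale partial_group =
  fixes M :: "('a, 'z) partial_group_scheme"
  assumes dom_lists: "pg_dom M \<subseteq> lists (pg_carrier M)"
    and Nil_in_dom [simp]: "[] \<in> pg_dom M"
    and singleton_in_dom: "\<And>x. x \<in> pg_carrier M \<Longrightarrow> [x] \<in> pg_dom M"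
    and append_in_domD: "\<And>u v. u @ v \<in> pg_dom M \<Longrightarrow> u \<in> pg_dom M \<and> v \<in> pg_dom M"
    and prod_in_carrier: "\<And>u. u \<in> pg_dom M \<Longrightarrow> pg_prod M u \<in> pg_carrier M"
    and prod_singleton [simp]: "\<And>x. x \<in> pg_carrier M \<Longrightarrow> pg_prod M [x] = x"
    and prod_collapse: "\<And>u v w. u @ v @ w \<in> pg_dom M \<Longrightarrow>
      u @ [pg_prod M v] @ w \<in> pg_dom M \<and> pg_prod M (u @ v @ w) = pg_prod M (u @ [pg_prod M v] @ w)"
    and inv_in_carrier: "\<And>x. x \<in> pg_carrier M \<Longrightarrow> pg_inv M x \<in> pg_carrier M"
    and inv_inv [simp]: "\<And>x. x \<in> pg_carrier M \<Longrightarrow> pg_inv M (pg_inv M x) = x"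
    and inv_word_append: "\<And>u. u \<in> pg_dom M \<Longrightarrow>
      inv_word M u @ u \<in> pg_dom M \<and> pg_prod M (inv_word M u @ u) = pg_unit M"

lemma partial_group_iff_is_partial_group: "partial_group M \<longleftrightarrow> is_partial_group M"
  unfolding partial_group_def is_partial_group_def
    by (simp add: Ball_def all_conj_distrib imp_conjR)

lemma length_inv_word [simp]: "length (inv_word M w) = length w"
  by (simp add: inv_word_def)

lemma nth_inv_word: "t < length w \<Longrightarrow> inv_word M w ! t = pg_inv M (w ! (length w - Suc t))"
  by (simp add: inv_word_def rev_nth)

context partial_group
begin

abbreviation "C \<equiv> pg_carrier M"
abbreviation "D \<equiv> pg_dom M"
abbreviation "P \<equiv> pg_prod M"
abbreviation "iv \<equiv> pg_inv M"
abbreviation "one \<equiv> pg_unit M"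

lemma set_in_carrier: "w \<in> D \<Longrightarrow> set w \<subseteq> C"
  using dom_lists by auto

lemma nth_in_carrier [simp]: "w \<in> D \<Longrightarrow> k < length w \<Longrightarrow> w ! k \<in> C"
  using set_in_carrier nth_mem by blast

lemma unit_in_carrier: "one \<in> C"
  unfolding pg_unit_def using prod_in_carrier by simp

lemma take_in_dom: "w \<in> D \<Longrightarrow> take k w \<in> D"
  using append_in_domD[of "take k w" "drop k w"] by simp

lemma drop_in_dom: "w \<in> D \<Longrightarrow> drop k w \<in> D"
  using append_in_domD[of "take k w" "drop k w"] by simp

lemma pair_in_dom: "w \<in> D \<Longrightarrow> Suc m < length w \<Longrightarrow> [w ! m, w ! Suc m] \<in> D"
  using take_in_dom[OF drop_in_dom, of w 2 m]
  by (simp add: take_Suc_conv_app_nth numeral_2_eq_2)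

lemma triple_in_dom:
  "w \<in> D \<Longrightarrow> Suc (Suc m) < length w \<Longrightarrow> [w ! m, w ! Suc m, w ! Suc (Suc m)] \<in> D"
  using take_in_dom[OF drop_in_dom, of w 3 m]
  by (simp add: take_Suc_conv_app_nth numeral_3_eq_3)

lemma insert_unit: "u @ w \<in> D \<Longrightarrow> u @ [one] @ w \<in> D \<and> P (u @ [one] @ w) = P (u @ w)"
  using prod_collapse[of u "[]" w] unfolding pg_unit_def by simp

lemma prod_unit_right [simp]: "a \<in> C \<Longrightarrow> P [a, one] = a"
  using insert_unit[of "[a]" "[]"] singleton_in_dom by simp

lemma prod_unit_left [simp]: "a \<in> C \<Longrightarrow> P [one, a] = a"
  using insert_unit[of "[]" "[a]"] singleton_in_dom by simp

lemma prod_pair_assoc: "[a, b, c] \<in> D \<Longrightarrow> P [P [a, b], c] = P [a, P [b, c]]"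
  using prod_collapse[of "[]" "[a, b]" "[c]"] prod_collapse[of "[a]" "[b, c]" "[]"] by simp

lemma inv_word_in_dom: "u \<in> D \<Longrightarrow> inv_word M u \<in> D"
  using inv_word_append append_in_domD by blast

lemma inv_word_inv_word: "u \<in> D \<Longrightarrow> inv_word M (inv_word M u) = u"
  using set_in_carrier[of u] by (simp add: inv_word_def rev_map map_idI subset_iff)

lemma inv_unit: "iv one = one"
  using inv_word_append[OF singleton_in_dom[OF unit_in_carrier]] inv_in_carrier[OF unit_in_carrier]
  by (simp add: inv_word_def)

lemma prod_inv_right: "x \<in> C \<Longrightarrow> [x, iv x] \<in> D \<and> P [x, iv x] = one"
  using inv_word_append[OF singleton_in_dom[OF inv_in_carrier]] by (simp add: inv_word_def)

text \<open>With \<open>p = P [iv b, iv a]\<close> and \<open>c = P [a, b]\<close> one gets \<open>P [p, c] = one\<close>, and the word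
  \<open>[p, c, iv c]\<close> lies in the domain (it is a prefix of \<open>inv_word (inv_word [p, c]) @ inv_word [p, c]\<close>),
  so \<open>iv c = P [P [p, c], iv c] = P [p, P [c, iv c]] = p\<close>.\<close>
lemma inv_prod_pair:
  assumes ab: "[a, b] \<in> D"
  shows "iv (P [a, b]) = P [iv b, iv a]"
proof -
  let ?c = "P [a, b]" and ?p = "P [iv b, iv a]"
  have c: "?c \<in> C" using prod_in_carrier[OF ab] .
  have "[iv b, iv a] @ [a, b] \<in> D" "P ([iv b, iv a] @ [a, b]) = one"
    using inv_word_append[OF ab] by (simp_all add: inv_word_def)
  then have "[?p, a, b] \<in> D" "P [?p, a, b] = one"
    using prod_collapse[of "[]" "[iv b, iv a]" "[a, b]"] by simp_all
  then have pc: "[?p, ?c] \<in> D" "P [?p, ?c] = one"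
    using prod_collapse[of "[?p]" "[a, b]" "[]"] by simp_all
  have "inv_word M (inv_word M [?p, ?c]) @ inv_word M [?p, ?c] \<in> D"
    using inv_word_append[OF inv_word_in_dom[OF pc(1)]] by blast
  then have "[?p, ?c, iv ?c] @ [iv ?p] \<in> D"
    using inv_word_inv_word[OF pc(1)] by (simp add: inv_word_def)
  then have "P [P [?p, ?c], iv ?c] = P [?p, P [?c, iv ?c]]"
    using append_in_domD prod_pair_assoc by blast
  then show ?thesis
    using pc prod_inv_right[OF c] set_in_carrier[OF pc(1)] inv_in_carrier[OF c] by simp
qed

end

section \<open>The nerve of a partial group\<close>

lemma nerve_simp [simp]: "simp (nerve M) n = {w \<in> pg_dom M. length w = n}"
  by (simp add: nerve_def)

lemma nerve_face: "face (nerve M) n i w = (if i = 0 then tl w else if i = n then butlast w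
    else take (i - 1) w @ [pg_prod M [w ! (i - 1), w ! i]] @ drop (Suc i) w)"
  by (simp add: nerve_def)

lemma nerve_degen: "degen (nerve M) n i w = take i w @ [pg_unit M] @ drop i w"
  by (simp add: nerve_def)

lemma length_nerve_face [simp]:
  "length w = n \<Longrightarrow> 1 \<le> n \<Longrightarrow> i \<le> n \<Longrightarrow> length (face (nerve M) n i w) = n - 1"
  by (auto simp: nerve_face)

lemma nth_nerve_face: "length w = n \<Longrightarrow> 1 \<le> n \<Longrightarrow> i \<le> n \<Longrightarrow> k < n - 1 \<Longrightarrow>
    face (nerve M) n i w ! k = (if Suc k < i then w ! k
      else if Suc k = i then pg_prod M [w ! k, w ! Suc k] else w ! Suc k)"
  by (auto simp: nerve_face nth_tl nth_butlast nth_append min_def)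

lemma length_nerve_degen [simp]: "i \<le> length w \<Longrightarrow> length (degen (nerve M) n i w) = Suc (length w)"
  by (simp add: nerve_degen)

lemma nth_nerve_degen: "i \<le> length w \<Longrightarrow> k \<le> length w \<Longrightarrow>
    degen (nerve M) n i w ! k = (if k < i then w ! k else if k = i then pg_unit M else w ! (k - 1))"
  by (auto simp: nerve_degen nth_append min_def)

lemma nerve_drop_last: "length w = m \<Longrightarrow> k \<le> m \<Longrightarrow> drop_last (nerve M) k m w = take (m - k) w"
proof (induction k arbitrary: m w)
  case (Suc k)
  then have "drop_last (nerve M) (Suc k) m w = take (m - 1 - k) (butlast w)"
    using Suc.IH[of "butlast w" "m - 1"] by (simp add: nerve_face)
  with Suc.prems show ?case
    by (simp add: butlast_conv_take min_def)
qed simp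

lemma nerve_drop_first: "drop_first (nerve M) k m w = drop k w"
  by (induction k arbitrary: m w) (simp_all add: nerve_face drop_Suc)

lemma nerve_enum: "length w = n \<Longrightarrow> enum (nerve M) n w = map (\<lambda>a. [a]) w"
  by (intro nth_equalityI)
    (auto simp: enum_def edge_def nerve_drop_last nerve_drop_first take_Suc_conv_app_nth)

lemma nerve_N_sset: "N_sset (nerve M)"
  unfolding N_sset_def
proof (intro allI inj_onI)
  fix n v w assume "v \<in> simp (nerve M) n" "w \<in> simp (nerve M) n"
    and "enum (nerve M) n v = enum (nerve M) n w"
  then have "map (\<lambda>a. [a]) v = map (\<lambda>a. [a]) w"
    by (simp add: nerve_enum)
  then show "v = w"
    by (simp add: inj_map_eq_map inj_on_def)
qed

context partial_group
begin

lemma nerve_face_in_dom: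
  "w \<in> D \<Longrightarrow> length w = n \<Longrightarrow> 1 \<le> n \<Longrightarrow> i \<le> n \<Longrightarrow> face (nerve M) n i w \<in> D"
proof -
  assume w: "w \<in> D" "length w = n" "1 \<le> n" "i \<le> n"
  show ?thesis
  proof (cases "i = 0 \<or> i = n")
    case True
    then show ?thesis using w drop_in_dom[OF w(1), of 1] take_in_dom[OF w(1), of "n - 1"]
      by (auto simp: nerve_face drop_Suc butlast_conv_take)
  next
    case False
    then have i: "0 < i" "i < n"
      using w by auto
    have "w = take (i - 1) w @ drop (i - 1) w"
      by simp
    also have "drop (i - 1) w = w ! (i - 1) # drop i w"
      using i w Cons_nth_drop_Suc[of "i - 1" w] by simp
    also have "drop i w = w ! i # drop (Suc i) w"
      using i w by (simp add: Cons_nth_drop_Suc)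
    finally have "w = take (i - 1) w @ [w ! (i - 1), w ! i] @ drop (Suc i) w"
      by simp
    with w(1) have "take (i - 1) w @ [w ! (i - 1), w ! i] @ drop (Suc i) w \<in> D" by simp
    with False show ?thesis using prod_collapse by (simp add: nerve_face)
  qed
qed

lemma nerve_degen_in_dom: "w \<in> D \<Longrightarrow> degen (nerve M) n i w \<in> D"
  using insert_unit[of "take i w" "drop i w"] by (simp add: nerve_degen)

lemma nerve_simplicial_set: "simplicial_set (nerve M)"
proof unfold_locales
  fix n i x assume "x \<in> simp (nerve M) n" "1 \<le> n" "i \<le> n"
  then show "face (nerve M) n i x \<in> simp (nerve M) (n - 1)"
    by (simp add: nerve_face_in_dom)
next
  fix n i x assume "x \<in> simp (nerve M) n" "i \<le> n"
  then show "degen (nerve M) n i x \<in> simp (nerve M) (Suc n)"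
    by (simp add: nerve_degen_in_dom)
next
  fix n i j x assume x: "x \<in> simp (nerve M) n" and "2 \<le> n" "i < j" "j \<le> n"
  have "P [P [x ! k, x ! Suc k], x ! Suc (Suc k)] = P [x ! k, P [x ! Suc k, x ! Suc (Suc k)]]"
    if "Suc (Suc k) < n" for k
    using x that prod_pair_assoc triple_in_dom by simp
  with x \<open>2 \<le> n\<close> \<open>i < j\<close> \<open>j \<le> n\<close>
  show "face (nerve M) (n - 1) i (face (nerve M) n j x)
      = face (nerve M) (n - 1) (j - 1) (face (nerve M) n i x)"
    by (intro nth_equalityI) (auto simp: nth_nerve_face)
qed (auto intro!: nth_equalityI simp: nth_nerve_face nth_nerve_degen)

lemma nerve_simp_0: "simp (nerve M) 0 = {[]}"
  by auto

lemma nerve_unit: "sset_unit (nerve M) = [one]"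
  using nerve_simp_0 by (simp add: sset_unit_def nerve_degen del: nerve_simp)

lemma nerve_drop_second: "w \<in> D \<Longrightarrow> length w = m \<Longrightarrow> k < m \<Longrightarrow>
    drop_second (nerve M) k m w = P (take (Suc k) w) # drop (Suc k) w"
proof (induction k arbitrary: m w)
  case 0
  then show ?case using set_in_carrier[of w] by (cases w) auto
next
  case (Suc k)
  let ?w' = "P [w ! 0, w ! 1] # drop 2 w"
  have face: "face (nerve M) m 1 w = ?w'"
    using Suc.prems by (simp add: nerve_face numeral_2_eq_2)
  have "?w' \<in> D"
    using nerve_face_in_dom[OF Suc.prems(1,2), of 1] face Suc.prems by simp
  then have "drop_second (nerve M) (Suc k) m w = P (take (Suc k) ?w') # drop (Suc k) ?w'"
    using face Suc.IH[of ?w' "m - 1"] Suc.prems by simp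
  moreover have "take (Suc (Suc k)) w = [] @ [w ! 0, w ! 1] @ take k (drop 2 w)"
    using Suc.prems by (cases w; cases "tl w") auto
  then have "P (take (Suc (Suc k)) w) = P (take (Suc k) ?w')"
    using prod_collapse[of "[]" "[w ! 0, w ! 1]" "take k (drop 2 w)"]
      take_in_dom[OF Suc.prems(1), of "Suc (Suc k)"]
    by simp
  ultimately show ?case
    by (simp add: numeral_2_eq_2)
qed

lemma nerve_prod_op: "w \<in> D \<Longrightarrow> prod_op (nerve M) (length w) w = [P w]"
  by (cases "length w")
    (simp_all add: prod_op_def nerve_degen pg_unit_def nerve_drop_second)

lemma inv_word_nerve_face:
  assumes x: "x \<in> D" "length x = n" and i: "1 \<le> n" "i \<le> n"
  shows "inv_word M (face (nerve M) n i x) = face (nerve M) n (n - i) (inv_word M x)"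
proof (rule nth_equalityI)
  fix k assume "k < length (inv_word M (face (nerve M) n i x))"
  then have k: "k < n - 1" using x i by simp
  define m where "m = n - 2 - k"
  have m: "Suc m < n" "n - Suc k = Suc m" "n - Suc (Suc k) = m"
    using k by (auto simp: m_def)
  have "iv (P [x ! m, x ! Suc m]) = P [iv (x ! Suc m), iv (x ! m)]"
    using inv_prod_pair pair_in_dom[OF x(1)] m x by simp
  moreover have "inv_word M (face (nerve M) n i x) ! k = iv (face (nerve M) n i x ! m)"
    using nth_inv_word[of k "face (nerve M) n i x"] k x i by (simp add: m_def)
  moreover have "Suc k < n - i \<longleftrightarrow> i < Suc m" "Suc k = n - i \<longleftrightarrow> Suc m = i"
    using k i by (auto simp: m_def)
  ultimately show "inv_word M (face (nerve M) n i x) ! k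
      = face (nerve M) n (n - i) (inv_word M x) ! k"
    using x i k m by (auto simp: nth_nerve_face nth_inv_word)
qed (use x i in simp)

lemma inv_word_nerve_degen:
  assumes "length x = n" "i \<le> n"
  shows "inv_word M (degen (nerve M) n i x) = degen (nerve M) n (n - i) (inv_word M x)"
  using assms rev_drop[of i "map iv x"] rev_take[of i "map iv x"] inv_unit
  by (simp add: nerve_degen inv_word_def drop_map take_map)

lemma nerve_inversion: "inversion (nerve M) (\<lambda>n. inv_word M)"
  unfolding inversion_def
proof (intro conjI ballI allI impI)
  show "sset_map (nerve M) (opposite (nerve M)) (\<lambda>n. inv_word M)"
    by (auto simp: sset_map_def opposite_def inv_word_in_dom inv_word_nerve_face
        inv_word_nerve_degen)
next
  fix n x assume "x \<in> simp (nerve M) n"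
  then show "inv_word M (inv_word M x) = x"
    by (simp add: inv_word_inv_word)
next
  fix n x assume x: "x \<in> simp (nerve M) n"
  let ?y = "inv_word M x @ x"
  have "?y \<in> simp (nerve M) (2 * n)" "P ?y = one"
    using inv_word_append x by auto
  moreover have "enum (nerve M) (2 * n) ?y = enum (nerve M) n (inv_word M x) @ enum (nerve M) n x"
    using x by (simp add: nerve_enum)
  ultimately show "\<exists>y\<in>simp (nerve M) (2 * n).
      enum (nerve M) (2 * n) y = enum (nerve M) n (inv_word M x) @ enum (nerve M) n x
      \<and> prod_op (nerve M) (2 * n) y = sset_unit (nerve M)"
    using nerve_prod_op[of ?y] by (auto simp: nerve_unit)
qed

lemma nerve_red_N_inv_sset: "red_N_inv_sset (nerve M)"
  using nerve_simplicial_set nerve_N_sset nerve_simp_0 nerve_inversion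
  unfolding red_N_inv_sset_def reduced_def simplicial_set_iff_is_sset by blast

end

section \<open>The partial group of a reduced \<open>N\<close>-simplicial set with inversion\<close>

locale reduced_N_sset_inversion = simplicial_set_reversal X \<nu> for X :: "'s sset" and \<nu> +
  fixes v0 :: 's
  assumes reduced: "simp X 0 = {v0}"
    and N_sset: "N_sset X"
    and reversal_involutive: "\<And>n x. x \<in> simp X n \<Longrightarrow> \<nu> n (\<nu> n x) = x"
    and reversal_append: "\<And>n x. x \<in> simp X n \<Longrightarrow> 1 \<le> n \<Longrightarrow>
      \<exists>y\<in>simp X (2 * n). enum X (2 * n) y = enum X n (\<nu> n x) @ enum X n x
        \<and> prod_op X (2 * n) y = sset_unit X"
begin

definition simplex_of :: "'s list \<Rightarrow> 's" where
  "simplex_of w = (THE x. x \<in> simp X (length w) \<and> enum X (length w) x = w)"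

definition edge_pg :: "'s partial_group" where
  "edge_pg = \<lparr>pg_carrier = simp X 1, pg_dom = {enum X n x | n x. x \<in> simp X n},
     pg_prod = (\<lambda>w. prod_op X (length w) (simplex_of w)), pg_inv = \<nu> 1\<rparr>"

lemma edge_pg_simps [simp]:
  "pg_carrier edge_pg = simp X 1"
  "pg_dom edge_pg = {enum X n x | n x. x \<in> simp X n}"
  "pg_prod edge_pg w = prod_op X (length w) (simplex_of w)"
  "pg_inv edge_pg = \<nu> 1"
  by (simp_all add: edge_pg_def)

lemma enum_in_edge_pg_dom: "x \<in> simp X n \<Longrightarrow> enum X n x \<in> pg_dom edge_pg"
  by auto

lemma simplex_of_enum: "x \<in> simp X n \<Longrightarrow> simplex_of (enum X n x) = x"
  using N_sset unfolding N_sset_def simplex_of_def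
  by (auto intro!: the1_equality dest: inj_onD)

lemma edge_pg_prod_enum: "x \<in> simp X n \<Longrightarrow> pg_prod edge_pg (enum X n x) = prod_op X n x"
  by (simp add: simplex_of_enum)

lemma edge_pg_unit: "pg_unit edge_pg = degen X 0 0 v0"
  using edge_pg_prod_enum[of v0 0] reduced by (simp add: pg_unit_def enum_0 prod_op_def)

lemma edge_pg_append_in_domD:
  assumes "u @ v \<in> pg_dom edge_pg"
  shows "u \<in> pg_dom edge_pg \<and> v \<in> pg_dom edge_pg"
proof -
  obtain n x where x: "x \<in> simp X n" and e: "enum X n x = u @ v"
    using assms by auto
  then have n: "n = length u + length v"
    using length_enum[of X n x] by simp
  have "enum X (length u - 0) (subsimplex X n x 0 (length u)) = u"
    "enum X (n - length u) (subsimplex X n x (length u) n) = v"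
    using enum_subsimplex[OF x, of 0 "length u"] enum_subsimplex[OF x, of "length u" n] e n
    by simp_all
  then show ?thesis
    using enum_in_edge_pg_dom subsimplex_in_simp[OF x, of 0 "length u"]
      subsimplex_in_simp[OF x, of "length u" n] n by fastforce
qed

lemma edge_pg_prod_collapse:
  assumes "u @ v @ w \<in> pg_dom edge_pg"
  shows "u @ [pg_prod edge_pg v] @ w \<in> pg_dom edge_pg
    \<and> pg_prod edge_pg (u @ v @ w) = pg_prod edge_pg (u @ [pg_prod edge_pg v] @ w)"
proof -
  obtain n x where x: "x \<in> simp X n" and e: "enum X n x = u @ v @ w"
    using assms by auto
  let ?a = "length u" and ?k = "length v"
  have n: "n = ?a + ?k + length w"
    using length_enum[of X n x] e by simp
  have "enum X ?k (subsimplex X n x ?a (?a + ?k)) = v"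
    using enum_subsimplex[OF x, of ?a "?a + ?k"] e n by simp
  then have "pg_prod edge_pg v = prod_op X ?k (subsimplex X n x ?a (?a + ?k))"
    using edge_pg_prod_enum subsimplex_in_simp[OF x, of ?a "?a + ?k"] n by fastforce
  then obtain x' where x': "x' \<in> simp X (Suc n - ?k)"
    and e': "enum X (Suc n - ?k) x' = u @ [pg_prod edge_pg v] @ w"
    and p': "prod_op X (Suc n - ?k) x' = prod_op X n x"
    using segment_collapse[OF x, of ?a ?k] e n by auto
  have "pg_prod edge_pg (u @ v @ w) = prod_op X n x"
    using edge_pg_prod_enum[OF x] e by simp
  moreover have "pg_prod edge_pg (u @ [pg_prod edge_pg v] @ w) = prod_op X n x"
    using edge_pg_prod_enum[OF x'] e' p' by simp
  ultimately show ?thesis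
    using enum_in_edge_pg_dom[OF x'] e' by simp
qed

lemma edge_pg_inv_word_append:
  assumes "u \<in> pg_dom edge_pg"
  shows "inv_word edge_pg u @ u \<in> pg_dom edge_pg
    \<and> pg_prod edge_pg (inv_word edge_pg u @ u) = pg_unit edge_pg"
proof -
  obtain n x where x: "x \<in> simp X n" and u: "u = enum X n x"
    using assms by auto
  have inv_u: "inv_word edge_pg u = enum X n (\<nu> n x)"
    using enum_reversal[OF x] u by (simp add: inv_word_def)
  show ?thesis
  proof (cases "n = 0")
    case True
    then show ?thesis
      using u enum_in_edge_pg_dom[of v0 0] reduced by (simp add: enum_0 inv_word_def pg_unit_def)
  next
    case False
    then have "\<exists>y\<in>simp X (2 * n). enum X (2 * n) y = enum X n (\<nu> n x) @ enum X n x
        \<and> prod_op X (2 * n) y = sset_unit X"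
      using reversal_append[OF x] by simp
    then obtain y where y: "y \<in> simp X (2 * n)" "enum X (2 * n) y = inv_word edge_pg u @ u"
      "prod_op X (2 * n) y = sset_unit X"
      using inv_u u by auto
    moreover have "sset_unit X = pg_unit edge_pg"
      using reduced by (simp add: sset_unit_def edge_pg_unit)
    ultimately show ?thesis
      using enum_in_edge_pg_dom[OF y(1)] edge_pg_prod_enum[OF y(1)] by simp
  qed
qed

lemma edge_pg_partial_group: "partial_group edge_pg"
proof
  show "pg_dom edge_pg \<subseteq> lists (pg_carrier edge_pg)"
    using set_enum_subset by auto
  show "[] \<in> pg_dom edge_pg"
    using enum_in_edge_pg_dom[of v0 0] reduced by (simp add: enum_0)
  show "[x] \<in> pg_dom edge_pg" if "x \<in> pg_carrier edge_pg" for x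
    using that enum_in_edge_pg_dom[of x 1] unfolding enum_1 by simp
  show "pg_prod edge_pg [x] = x" if "x \<in> pg_carrier edge_pg" for x
    using that edge_pg_prod_enum[of x 1] unfolding enum_1 by (simp add: prod_op_def)
  show "pg_prod edge_pg u \<in> pg_carrier edge_pg" if "u \<in> pg_dom edge_pg" for u
    using that edge_pg_prod_enum prod_op_in_simp by auto
  show "u \<in> pg_dom edge_pg \<and> v \<in> pg_dom edge_pg" if "u @ v \<in> pg_dom edge_pg" for u v
    using that by (rule edge_pg_append_in_domD)
  show "u @ [pg_prod edge_pg v] @ w \<in> pg_dom edge_pg
    \<and> pg_prod edge_pg (u @ v @ w) = pg_prod edge_pg (u @ [pg_prod edge_pg v] @ w)"
    if "u @ v @ w \<in> pg_dom edge_pg" for u v w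
    using that by (rule edge_pg_prod_collapse)
  show "pg_inv edge_pg x \<in> pg_carrier edge_pg" "pg_inv edge_pg (pg_inv edge_pg x) = x"
    if "x \<in> pg_carrier edge_pg" for x
    using that reversal_in_simp reversal_involutive by simp_all
  show "inv_word edge_pg u @ u \<in> pg_dom edge_pg
    \<and> pg_prod edge_pg (inv_word edge_pg u @ u) = pg_unit edge_pg" if "u \<in> pg_dom edge_pg" for u
    using that by (rule edge_pg_inv_word_append)
qed

lemma nerve_edge_pg_simp: "simp (nerve edge_pg) n = enum X n ` simp X n"
  by (auto simp: nerve_def)

lemma enum_face_eq_nerve_face:
  assumes x: "x \<in> simp X n" and "1 \<le> n" "i \<le> n"
  shows "enum X (n - 1) (face X n i x) = face (nerve edge_pg) n i (enum X n x)"
proof (rule nth_equalityI)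
  fix k assume "k < length (enum X (n - 1) (face X n i x))"
  then have k: "Suc k < n" by simp
  have "enum X 2 (subsimplex X n x k (Suc (Suc k))) = [enum X n x ! k, enum X n x ! Suc k]"
    using enum_subsimplex[OF x, of k "Suc (Suc k)"] k
    by (simp add: take_Suc_conv_app_nth numeral_2_eq_2)
  moreover have "subsimplex X n x k (Suc (Suc k)) \<in> simp X 2"
    using subsimplex_in_simp[OF x, of k "Suc (Suc k)"] k by simp
  ultimately have "pg_prod edge_pg [enum X n x ! k, enum X n x ! Suc k]
      = face X 2 1 (subsimplex X n x k (Suc (Suc k)))"
    using edge_pg_prod_enum prod_op_2 by metis
  moreover have "face (nerve edge_pg) n i (enum X n x) ! k = (if Suc k < i then enum X n x ! k
      else if Suc k = i then pg_prod edge_pg [enum X n x ! k, enum X n x ! Suc k]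
      else enum X n x ! Suc k)"
    using nth_nerve_face[of "enum X n x" n i k edge_pg] assms k by simp
  ultimately show "enum X (n - 1) (face X n i x) ! k = face (nerve edge_pg) n i (enum X n x) ! k"
    using nth_enum_face[OF x assms(3) k] by auto
qed (use assms in simp)

lemma enum_degen_eq_nerve_degen:
  "x \<in> simp X n \<Longrightarrow> i \<le> n \<Longrightarrow> enum X (Suc n) (degen X n i x) = degen (nerve edge_pg) n i (enum X n x)"
  using enum_degen subsimplex_in_simp[of x n i i] reduced
  by (simp add: nerve_degen edge_pg_unit prod_op_def)

lemma sset_iso_nerve_edge_pg: "sset_iso X (nerve edge_pg)"
proof (rule sset_iso_if_bij_betw)
  show "sset_map X (nerve edge_pg) (enum X)"
    unfolding sset_map_def
    using enum_face_eq_nerve_face enum_degen_eq_nerve_degen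
    by (auto simp del: nerve_simp simp add: nerve_edge_pg_simp)
  show "bij_betw (enum X n) (simp X n) (simp (nerve edge_pg) n)" for n
    using N_sset by (simp add: N_sset_def bij_betw_def nerve_edge_pg_simp del: nerve_simp)
qed

end

lemma red_N_inv_sset_iso_nerve:
  fixes X :: "'s sset"
  assumes "red_N_inv_sset X"
  shows "\<exists>M :: 's partial_group. partial_group M \<and> sset_iso X (nerve M)"
proof -
  obtain \<nu> v0 where X: "simplicial_set X" "simp X 0 = {v0}" "N_sset X" and \<nu>: "inversion X \<nu>"
    using assms unfolding red_N_inv_sset_def reduced_def simplicial_set_iff_is_sset[symmetric]
    by blast
  have \<nu>_map: "sset_map X (opposite X) \<nu>" and \<nu>_inv: "\<forall>n. \<forall>x\<in>simp X n. \<nu> n (\<nu> n x) = x"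
    and \<nu>_append: "\<forall>n. \<forall>x\<in>simp X n. 1 \<le> n \<longrightarrow>
      (\<exists>y\<in>simp X (2 * n). enum X (2 * n) y = enum X n (\<nu> n x) @ enum X n x
        \<and> prod_op X (2 * n) y = sset_unit X)"
    using \<nu> unfolding inversion_def by blast+
  interpret reduced_N_sset_inversion X \<nu> v0
    by (rule reduced_N_sset_inversion.intro[OF simplicial_set_reversal.intro[OF X(1)
          simplicial_set_reversal_axioms.intro[OF \<nu>_map]]
        reduced_N_sset_inversion_axioms.intro[OF X(2,3)]])
      (use \<nu>_inv \<nu>_append in blast)+
  show ?thesis
    using edge_pg_partial_group sset_iso_nerve_edge_pg by blast
qed

section \<open>The nerve functor is fully faithful\<close>

lemma (in partial_group) nerve_map_sset_map:
  assumes h: "pg_hom M M' \<beta>"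
  shows "sset_map (nerve M) (nerve M') (nerve_map \<beta>)"
proof -
  have hD: "\<And>u. u \<in> D \<Longrightarrow> map \<beta> u \<in> pg_dom M'"
    and hP: "\<And>u. u \<in> D \<Longrightarrow> \<beta> (P u) = pg_prod M' (map \<beta> u)"
    using h unfolding pg_hom_def by blast+
  have "\<beta> one = pg_unit M'"
    using hP[of "[]"] by (simp add: pg_unit_def)
  moreover have "map \<beta> (face (nerve M) n i x) = face (nerve M') n i (map \<beta> x)"
    if x: "x \<in> D" "length x = n" and i: "1 \<le> n" "i \<le> n" for n i x
  proof (rule nth_equalityI)
    fix k assume "k < length (map \<beta> (face (nerve M) n i x))"
    then have k: "k < n - 1" using x i by simp
    then have "\<beta> (P [x ! k, x ! Suc k]) = pg_prod M' [\<beta> (x ! k), \<beta> (x ! Suc k)]"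
      using hP pair_in_dom[OF x(1)] x by simp
    then show "map \<beta> (face (nerve M) n i x) ! k = face (nerve M') n i (map \<beta> x) ! k"
      using nth_nerve_face[OF x(2) i k, of M] nth_nerve_face[of "map \<beta> x" n i k M'] x i k by auto
  qed (use x i in simp)
  ultimately show ?thesis
    using hD by (auto simp: sset_map_def nerve_map_def nerve_degen take_map drop_map)
qed

lemma (in partial_group) sset_map_nerve_eq_nerve_map:
  assumes g: "sset_map (nerve M) (nerve M') g" and w: "w \<in> simp (nerve M) n"
  shows "g n w = nerve_map (\<lambda>x. hd (g 1 [x])) n w"
proof -
  interpret nerve: simplicial_set "nerve M"
    by (rule nerve_simplicial_set)
  have g_simp: "g n w \<in> simp (nerve M') n" if "w \<in> simp (nerve M) n" for n w
    using g that unfolding sset_map_def by blast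
  have g_singleton: "g 1 [x] = [hd (g 1 [x])]" if "x \<in> C" for x
    using g_simp[of "[x]" 1] singleton_in_dom[OF that] by (cases "g 1 [x]") auto
  have "map (\<lambda>a. [a]) (g n w) = map (g 1) (map (\<lambda>a. [a]) w)"
    using nerve.enum_map[OF g w] g_simp[OF w] w by (simp add: nerve_enum)
  also have "\<dots> = map (\<lambda>a. [a]) (map (\<lambda>x. hd (g 1 [x])) w)"
    using w g_singleton set_in_carrier[of w] by (auto intro!: map_cong)
  finally have "g n w = map (\<lambda>x. hd (g 1 [x])) w"
    by (rule map_injective) (simp add: inj_def)
  then show ?thesis
    by (simp add: nerve_map_def)
qed

lemma pg_hom_of_sset_map_nerve:
  assumes M: "partial_group M" and M': "partial_group M'" and g: "sset_map (nerve M) (nerve M') g"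
  shows "pg_hom M M' (\<lambda>x. hd (g 1 [x]))"
proof -
  interpret M: partial_group M by (rule M)
  interpret M': partial_group M' by (rule M')
  interpret nerve: simplicial_set "nerve M"
    by (rule M.nerve_simplicial_set)
  let ?\<beta> = "\<lambda>x. hd (g 1 [x])"
  have g_map: "g (length u) u = map ?\<beta> u" and map_in_dom: "map ?\<beta> u \<in> pg_dom M'"
    if "u \<in> pg_dom M" for u
    using M.sset_map_nerve_eq_nerve_map[OF g, of u "length u"] g that
    by (auto simp: sset_map_def nerve_map_def)
  have "?\<beta> (pg_prod M u) = pg_prod M' (map ?\<beta> u)" if u: "u \<in> pg_dom M" for u
  proof -
    have "g 1 [pg_prod M u] = prod_op (nerve M') (length u) (g (length u) u)"
      using nerve.prod_op_map[OF g, of u "length u"] M.nerve_prod_op[OF u] u by simp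
    then show ?thesis
      using M'.nerve_prod_op[OF map_in_dom[OF u]] g_map[OF u] by simp
  qed
  moreover have "?\<beta> x \<in> pg_carrier M'" if "x \<in> pg_carrier M" for x
    using M'.set_in_carrier[OF map_in_dom[OF M.singleton_in_dom[OF that]]] by simp
  ultimately show ?thesis
    unfolding pg_hom_def using map_in_dom by blast
qed

lemma ex_pg_hom_nerve_map:
  assumes "partial_group M" "partial_group M'" "sset_map (nerve M) (nerve M') g"
  shows "\<exists>\<beta>. pg_hom M M' \<beta> \<and> (\<forall>n. \<forall>w\<in>simp (nerve M) n. g n w = nerve_map \<beta> n w)"
  using pg_hom_of_sset_map_nerve[OF assms] partial_group.sset_map_nerve_eq_nerve_map[OF assms(1,3)]
  by blast

lemma (in partial_group) nerve_map_faithful: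
  assumes "\<forall>n. \<forall>w\<in>simp (nerve M) n. nerve_map \<beta> n w = nerve_map \<beta>' n w"
  shows "\<forall>x\<in>C. \<beta> x = \<beta>' x"
proof
  fix x assume "x \<in> C"
  then show "\<beta> x = \<beta>' x"
    using assms[rule_format, of "[x]" 1] singleton_in_dom by (simp add: nerve_map_def)
qed

theorem theorem4p8:
  shows "(\<forall>M :: 'a partial_group. is_partial_group M \<longrightarrow> red_N_inv_sset (nerve M))
   \<and> (\<forall>(M :: 'a partial_group) (M' :: 'b partial_group) \<beta>.
        is_partial_group M \<and> is_partial_group M' \<and> pg_hom M M' \<beta> \<longrightarrow>
          sset_map (nerve M) (nerve M') (nerve_map \<beta>))
   \<and> (\<forall>(M :: 'a partial_group) (M' :: 'b partial_group) g.
        is_partial_group M \<and> is_partial_group M' \<and> sset_map (nerve M) (nerve M') g \<longrightarrow>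
          (\<exists>\<beta>. pg_hom M M' \<beta> \<and> (\<forall>n. \<forall>w\<in>simp (nerve M) n. g n w = nerve_map \<beta> n w)))
   \<and> (\<forall>(M :: 'a partial_group) (M' :: 'b partial_group) \<beta> \<beta>'.
        is_partial_group M \<and> is_partial_group M' \<and> pg_hom M M' \<beta> \<and> pg_hom M M' \<beta>'
        \<and> (\<forall>n. \<forall>w\<in>simp (nerve M) n. nerve_map \<beta> n w = nerve_map \<beta>' n w) \<longrightarrow>
          (\<forall>x\<in>pg_carrier M. \<beta> x = \<beta>' x))
   \<and> (\<forall>X :: 's sset. red_N_inv_sset X \<longrightarrow>
        (\<exists>M :: 's partial_group. is_partial_group M \<and> sset_iso X (nerve M)))"
  unfolding partial_group_iff_is_partial_group[symmetric]
proof (intro conjI allI impI; (elim conjE)?)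
  fix M :: "'a partial_group" and M' :: "'b partial_group" and \<beta> \<beta>' :: "'a \<Rightarrow> 'b" and g
  show "red_N_inv_sset (nerve M)" if "partial_group M"
    using that by (rule partial_group.nerve_red_N_inv_sset)
  show "sset_map (nerve M) (nerve M') (nerve_map \<beta>)" if "partial_group M" "pg_hom M M' \<beta>"
    using that by (rule partial_group.nerve_map_sset_map)
  show "\<exists>\<beta>. pg_hom M M' \<beta> \<and> (\<forall>n. \<forall>w\<in>simp (nerve M) n. g n w = nerve_map \<beta> n w)"
    if "partial_group M" "partial_group M'" "sset_map (nerve M) (nerve M') g"
    using that by (rule ex_pg_hom_nerve_map)
  show "\<forall>x\<in>pg_carrier M. \<beta> x = \<beta>' x"
    if "partial_group M" "\<forall>n. \<forall>w\<in>simp (nerve M) n. nerve_map \<beta> n w = nerve_map \<beta>' n w"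
    using that by (rule partial_group.nerve_map_faithful)
qed (rule red_N_inv_sset_iso_nerve)

end
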